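(* For all nonnegative integers $L,M$, \[ \sum_{j\in\mathbb{Z}}(-1)^j q^{\frac{1}{2}j(5j+1)}\mathcal{B}(L,M,2j+1,j) =\sum_{n\geq 0}q^{n^2}\begin{bmatrix}2L+M-n-1\\ 2L-1\end{bmatrix}\begin{bmatrix}L-1\\ n\end{bmatrix}. \]
   Context: $(x;q)_n=\prod_{i=0}^{n-1}(1-xq^i)$, $(q)_n=(q;q)_n$; $\begin{bmatrix}n\\ m\end{bmatrix}=\frac{(q)_n}{(q)_m(q)_{n-m}}$ if $m,n-m$ are nonnegative integers, $0$ otherwise. $\mathcal{B}(L,M,a,b)=\begin{bmatrix}L+M+a-b\\ L+a\end{bmatrix}\begin{bmatrix}L+M-a+b\\ L-a\end{bmatrix}$. *)

theory Defs
  imports "HOL-Computational_Algebra.Formal_Power_Series"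
begin

definition qpoch :: "rat fps \<Rightarrow> nat \<Rightarrow> rat fps" where
  "qpoch x n = (\<Prod>i<n. 1 - x * fps_X ^ i)"

definition qfac :: "nat \<Rightarrow> rat fps" where
  "qfac n = qpoch fps_X n"

definition qbinom :: "int \<Rightarrow> int \<Rightarrow> rat fps" where
  "qbinom n m = (if 0 \<le> m \<and> 0 \<le> n - m
      then qfac (nat n) / (qfac (nat m) * qfac (nat (n - m))) else 0)"

definition BB :: "int \<Rightarrow> int \<Rightarrow> int \<Rightarrow> int \<Rightarrow> rat fps" where
  "BB L M a b = qbinom (L + M + a - b) (L + a) * qbinom (L + M - a + b) (L - a)"

end

theory Submission
  imports Defs "HOL-Library.Groups_Big_Fun"
begin

(* Both sides are members of two families of finitely supported sums over products of two
   Gaussian binomials: alternating sums bos with quadratic exponent (5j^2 + (2s+1)j)/2, and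
   positive sums ferm with exponent n^2 + t n. The q-Pascal rule applied to one binomial factor
   turns a member of either family into a combination of two neighbouring members, at the cost of
   shifting the linear parameter s (resp. t). For three suitable members A, B, C of each family,
   indexed by (L, M), this closes up into the same first-order q-difference system in L and M;
   for the alternating sums the system closes because bos a b (a-2) (b+1) 2 vanishes under the
   sign-reversing involution j -> -1 - j. Both triples have the same values on L = 0 and on M = 0,
   so they coincide, and the theorem is the equality of the B-members. *)

abbreviation q :: "rat fps" where "q \<equiv> fps_X"

lemma Sum_any_add_mult:
  fixes f g h :: "'b \<Rightarrow> 'a::comm_semiring_0"
  assumes "\<And>j. f j = g j + c * h j" "finite {j. g j \<noteq> 0}" "finite {j. h j \<noteq> 0}"
  shows "Sum_any f = Sum_any g + c * Sum_any h"
proof -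
  have "finite {j. c * h j \<noteq> 0}"
    by (rule finite_subset[OF _ assms(3)]) auto
  then show ?thesis
    using assms by (simp add: Sum_any.distrib Sum_any_right_distrib)
qed

lemma Sum_any_eq_single:
  "(\<And>j. j \<noteq> i \<Longrightarrow> f j = 0) \<Longrightarrow> Sum_any f = f i"
  by (subst Sum_any.expand_superset[of "{i}"]) auto

lemma Sum_any_eq_0_if_sign_reversing:
  fixes f :: "'b \<Rightarrow> 'a::{idom, semiring_char_0}"
  assumes "bij g" "\<And>j. f (g j) = - f j"
  shows "Sum_any f = 0"
proof -
  have "Sum_any f = Sum_any (\<lambda>j. - f j)"
    using assms by (intro Sum_any.reindex_cong[of g]) (auto simp: fun_eq_iff)
  also have "\<dots> = - Sum_any f"
    by (simp add: Sum_any.expand_set sum_negf)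
  finally have "Sum_any f + Sum_any f = 0"
    by (simp only: eq_neg_iff_add_eq_0)
  then have "2 * Sum_any f = 0"
    by (simp only: mult_2)
  then show ?thesis
    by simp
qed

lemma Sum_any_nonneg_int:
  fixes f :: "int \<Rightarrow> 'a::comm_monoid_add"
  assumes "\<And>i. i < 0 \<Longrightarrow> f i = 0"
  shows "Sum_any f = (\<Sum>n. f (int n))"
proof -
  have "{i. f i \<noteq> 0} = int ` {n. f (int n) \<noteq> 0}"
    using assms by (auto simp: image_iff) (metis nonneg_int_cases not_less)
  then show ?thesis
    by (simp add: Sum_any.expand_set sum.reindex)
qed

section \<open>Gaussian binomials\<close>

lemma qfac_0 [simp]: "qfac 0 = 1"
  by (simp add: qfac_def qpoch_def)

lemma qfac_Suc: "qfac (Suc n) = qfac n * (1 - q ^ Suc n)"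
  by (simp add: qfac_def qpoch_def algebra_simps)

lemma qfac_nth_0 [simp]: "fps_nth (qfac n) 0 = 1"
  by (induction n) (simp_all add: qfac_Suc)

lemma qfac_nonzero [simp]: "qfac n \<noteq> 0"
  using qfac_nth_0[of n] by (metis fps_zero_nth zero_neq_one)

fun gauss_binom :: "nat \<Rightarrow> nat \<Rightarrow> rat fps" where
  "gauss_binom n 0 = 1"
| "gauss_binom 0 (Suc k) = 0"
| "gauss_binom (Suc n) (Suc k) = gauss_binom n k + q ^ Suc k * gauss_binom n (Suc k)"

lemma gauss_binom_eq_0: "n < k \<Longrightarrow> gauss_binom n k = 0"
  by (induction n k rule: gauss_binom.induct) auto

lemma gauss_binom_diag [simp]: "gauss_binom n n = 1"
  by (induction n) (auto simp: gauss_binom_eq_0)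

lemma gauss_binom_mult_qfac:
  "k \<le> n \<Longrightarrow> gauss_binom n k * (qfac k * qfac (n - k)) = qfac n"
proof (induction n arbitrary: k)
  case 0
  then show ?case
    by simp
next
  case (Suc n k)
  show ?case
  proof (cases k)
    case 0
    then show ?thesis
      by simp
  next
    case k: (Suc k')
    show ?thesis
    proof (cases "k' = n")
      case True
      then show ?thesis
        using k by (simp add: gauss_binom_eq_0 qfac_Suc)
    next
      case False
      then obtain d where n: "n = Suc (k' + d)"
        using k Suc.prems less_imp_Suc_add by fastforce
      have IH1: "gauss_binom n k' * (qfac k' * qfac (Suc d)) = qfac n"
        using Suc.IH[of k'] n by simp
      have IH2: "gauss_binom n (Suc k') * (qfac (Suc k') * qfac d) = qfac n"
        using Suc.IH[of "Suc k'"] n by simp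
      have "gauss_binom (Suc n) k * (qfac k * qfac (Suc n - k))
          = (gauss_binom n k' + q ^ Suc k' * gauss_binom n (Suc k')) * (qfac (Suc k') * qfac (Suc d))"
        using k n by simp
      also have "\<dots> = gauss_binom n k' * (qfac k' * qfac (Suc d)) * (1 - q ^ Suc k')
            + q ^ Suc k' * (gauss_binom n (Suc k') * (qfac (Suc k') * qfac d)) * (1 - q ^ Suc d)"
        by (simp add: qfac_Suc algebra_simps)
      also have "\<dots> = qfac n * (1 - q ^ Suc k' * q ^ Suc d)"
        unfolding IH1 IH2 by (simp add: algebra_simps)
      also have "\<dots> = qfac (Suc n)"
        using n by (simp add: qfac_Suc flip: power_add)
      finally show ?thesis .
    qed
  qed
qed

lemma qbinom_eq_gauss_binom:
  assumes "0 \<le> m" "m \<le> n"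
  shows "qbinom n m = gauss_binom (nat n) (nat m)"
proof -
  have "gauss_binom (nat n) (nat m) * (qfac (nat m) * qfac (nat (n - m))) = qfac (nat n)"
    using assms gauss_binom_mult_qfac[of "nat m" "nat n"] by (simp add: nat_diff_distrib)
  then have "qfac (nat n) / (qfac (nat m) * qfac (nat (n - m))) = gauss_binom (nat n) (nat m)"
    by (metis nonzero_mult_div_cancel_right mult_eq_0_iff qfac_nonzero)
  then show ?thesis
    using assms by (simp add: qbinom_def)
qed

definition qbinom2 :: "int \<Rightarrow> int \<Rightarrow> rat fps" where
  "qbinom2 a b = qbinom (a + b) a"

lemma qbinom2_eq_gauss_binom:
  "qbinom2 a b = (if 0 \<le> a \<and> 0 \<le> b then gauss_binom (nat (a + b)) (nat a) else 0)"
  by (auto simp: qbinom2_def qbinom_eq_gauss_binom) (auto simp: qbinom_def)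

lemma qbinom2_eq_0 [simp]:
  "a < 0 \<Longrightarrow> qbinom2 a b = 0" "b < 0 \<Longrightarrow> qbinom2 a b = 0"
  by (simp_all add: qbinom2_eq_gauss_binom)

lemma qbinom2_0_left [simp]: "qbinom2 0 b = (if 0 \<le> b then 1 else 0)"
  by (simp add: qbinom2_eq_gauss_binom)

lemma qbinom2_0_right [simp]: "qbinom2 a 0 = (if 0 \<le> a then 1 else 0)"
  by (simp add: qbinom2_eq_gauss_binom)

lemma qbinom2_commute: "qbinom2 a b = qbinom2 b a"
  unfolding qbinom2_def qbinom_def by (simp add: add.commute mult.commute)

lemma qbinom2_pascal:
  assumes "a \<noteq> 0 \<or> b \<noteq> 0"
  shows "qbinom2 a b = qbinom2 (a - 1) b + q ^ nat a * qbinom2 a (b - 1)"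
proof (cases "0 < a \<and> 0 < b")
  case True
  then obtain k l where kl: "a = int (Suc k)" "b = int (Suc l)"
    by (metis gr0_implies_Suc zero_less_imp_eq_int)
  have "nat a = Suc k" "nat (a + b) = Suc (Suc (k + l))"
    "nat (a - 1 + b) = Suc (k + l)" "nat (a + (b - 1)) = Suc (k + l)"
    using kl by simp_all
  then show ?thesis
    using kl by (simp add: qbinom2_eq_gauss_binom)
next
  case False
  with assms consider "a < 0" | "b < 0" | "a = 0" "0 < b" | "0 < a" "b = 0"
    by linarith
  then show ?thesis
    by cases simp_all
qed

lemma qbinom2_pascal':
  assumes "a \<noteq> 0 \<or> b \<noteq> 0"
  shows "qbinom2 a b = q ^ nat b * qbinom2 (a - 1) b + qbinom2 a (b - 1)"
proof -
  have "qbinom2 b a = qbinom2 (b - 1) a + q ^ nat b * qbinom2 b (a - 1)"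
    using assms by (intro qbinom2_pascal) auto
  then show ?thesis
    by (simp add: qbinom2_commute[of b a] qbinom2_commute[of "b - 1" a]
        qbinom2_commute[of b "a - 1"] add.commute)
qed

section \<open>The alternating sums\<close>

(* The numerator is even, and it is nonnegative for all j exactly when -3 <= s <= 2; this range
   is invariant under s -> -1 - s, the parameter change of bos_reflect. *)
definition bos_exp :: "int \<Rightarrow> int \<Rightarrow> nat" where
  "bos_exp s j = nat ((5 * j\<^sup>2 + (2 * s + 1) * j) div 2)"

lemma bos_exp_eq:
  assumes "-3 \<le> s" "s \<le> 2"
  shows "2 * int (bos_exp s j) = 5 * j\<^sup>2 + (2 * s + 1) * j"
proof -
  have eq: "5 * j\<^sup>2 + (2 * s + 1) * j = j * (5 * j + 2 * s + 1)"
    by (simp add: algebra_simps power2_eq_square)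
  consider "1 \<le> j" | "j = 0" | "j \<le> -1"
    by linarith
  then have "0 \<le> j * (5 * j + 2 * s + 1)"
    by cases (use assms in \<open>auto intro: mult_nonpos_nonpos\<close>)
  moreover have "even (j * (5 * j + 2 * s + 1))"
    by auto
  ultimately show ?thesis
    unfolding bos_exp_def eq by simp
qed

lemma power_bos_exp_shift:
  assumes "-3 \<le> s" "s \<le> 2" "-3 \<le> s + d" "s + d \<le> 2" "0 \<le> c" "0 \<le> c + d * j"
  shows "q ^ bos_exp s j * q ^ nat (c + d * j) = q ^ nat c * q ^ bos_exp (s + d) j"
proof -
  have "2 * int (bos_exp (s + d) j) = 2 * int (bos_exp s j) + 2 * d * j"
    using bos_exp_eq[of s j] bos_exp_eq[of "s + d" j] assms by (simp add: algebra_simps)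
  then have "bos_exp s j + nat (c + d * j) = nat c + bos_exp (s + d) j"
    using assms by linarith
  then show ?thesis
    by (simp flip: power_add)
qed

definition bos_term :: "int \<Rightarrow> int \<Rightarrow> int \<Rightarrow> int \<Rightarrow> int \<Rightarrow> int \<Rightarrow> rat fps" where
  "bos_term a1 b1 a2 b2 s j = (-1) ^ nat \<bar>j\<bar> * q ^ bos_exp s j
     * qbinom2 (a1 + 2 * j) (b1 - j) * qbinom2 (a2 - 2 * j) (b2 + j)"

(* By BB_eq_qbinom2, the left-hand side of the theorem is bos (L+1) M (L-1) M 0. *)
definition bos :: "int \<Rightarrow> int \<Rightarrow> int \<Rightarrow> int \<Rightarrow> int \<Rightarrow> rat fps" where
  "bos a1 b1 a2 b2 s = Sum_any (bos_term a1 b1 a2 b2 s)"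

lemma finite_bos_term_support: "finite {j. bos_term a1 b1 a2 b2 s j \<noteq> 0}"
proof (rule finite_subset)
  show "{j. bos_term a1 b1 a2 b2 s j \<noteq> 0} \<subseteq> {-b2..b1}"
    by (rule subsetI, rule ccontr) (auto simp: bos_term_def)
qed simp

lemma bos_term_pascal:
  assumes "0 \<le> a1" "a1 + 2 * b1 \<noteq> 0" "-3 \<le> s" "s \<le> 0"
  shows "bos_term a1 b1 a2 b2 s j
    = bos_term (a1 - 1) b1 a2 b2 s j + q ^ nat a1 * bos_term a1 (b1 - 1) a2 b2 (s + 2) j"
proof -
  define a b where "a = a1 + 2 * j" and "b = b1 - j"
  define c where "c = (-1) ^ nat \<bar>j\<bar> * qbinom2 (a2 - 2 * j) (b2 + j)"
  have shift: "q ^ bos_exp s j * (q ^ nat a * qbinom2 a (b - 1))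
      = q ^ nat a1 * (q ^ bos_exp (s + 2) j * qbinom2 a (b - 1))"
  proof (cases "0 \<le> a")
    case True
    then show ?thesis
      using power_bos_exp_shift[of s 2 a1 j] assms by (simp add: a_def mult.assoc[symmetric])
  qed simp
  have "qbinom2 a b = qbinom2 (a - 1) b + q ^ nat a * qbinom2 a (b - 1)"
    using assms by (intro qbinom2_pascal) (auto simp: a_def b_def)
  then have "bos_term a1 b1 a2 b2 s j
      = c * (q ^ bos_exp s j * qbinom2 (a - 1) b) + c * (q ^ bos_exp s j * (q ^ nat a * qbinom2 a (b - 1)))"
    by (simp add: bos_term_def c_def flip: a_def b_def) (simp add: algebra_simps)
  then show ?thesis
    unfolding shift by (simp add: bos_term_def a_def b_def c_def algebra_simps)
qed

lemma bos_term_pascal':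
  assumes "0 \<le> b1" "a1 + 2 * b1 \<noteq> 0" "-2 \<le> s" "s \<le> 2"
  shows "bos_term a1 b1 a2 b2 s j
    = bos_term a1 (b1 - 1) a2 b2 s j + q ^ nat b1 * bos_term (a1 - 1) b1 a2 b2 (s - 1) j"
proof -
  define a b where "a = a1 + 2 * j" and "b = b1 - j"
  define c where "c = (-1) ^ nat \<bar>j\<bar> * qbinom2 (a2 - 2 * j) (b2 + j)"
  have shift: "q ^ bos_exp s j * (q ^ nat b * qbinom2 (a - 1) b)
      = q ^ nat b1 * (q ^ bos_exp (s - 1) j * qbinom2 (a - 1) b)"
  proof (cases "0 \<le> b")
    case True
    then show ?thesis
      using power_bos_exp_shift[of s "-1" b1 j] assms by (simp add: b_def mult.assoc[symmetric])
  qed simp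
  have "qbinom2 a b = q ^ nat b * qbinom2 (a - 1) b + qbinom2 a (b - 1)"
    using assms by (intro qbinom2_pascal') (auto simp: a_def b_def)
  then have "bos_term a1 b1 a2 b2 s j
      = c * (q ^ bos_exp s j * qbinom2 a (b - 1)) + c * (q ^ bos_exp s j * (q ^ nat b * qbinom2 (a - 1) b))"
    by (simp add: bos_term_def c_def flip: a_def b_def) (simp add: algebra_simps)
  then show ?thesis
    unfolding shift by (simp add: bos_term_def a_def b_def c_def algebra_simps)
qed

lemma bos_pascal:
  assumes "0 \<le> a1" "a1 + 2 * b1 \<noteq> 0" "-3 \<le> s" "s \<le> 0"
  shows "bos a1 b1 a2 b2 s = bos (a1 - 1) b1 a2 b2 s + q ^ nat a1 * bos a1 (b1 - 1) a2 b2 (s + 2)"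
  unfolding bos_def
  by (rule Sum_any_add_mult[OF bos_term_pascal[OF assms] finite_bos_term_support finite_bos_term_support])

lemma bos_pascal':
  assumes "0 \<le> b1" "a1 + 2 * b1 \<noteq> 0" "-2 \<le> s" "s \<le> 2"
  shows "bos a1 b1 a2 b2 s = bos a1 (b1 - 1) a2 b2 s + q ^ nat b1 * bos (a1 - 1) b1 a2 b2 (s - 1)"
  unfolding bos_def
  by (rule Sum_any_add_mult[OF bos_term_pascal'[OF assms] finite_bos_term_support finite_bos_term_support])

lemma bos_reflect: "bos a1 b1 a2 b2 s = bos a2 b2 a1 b1 (-1 - s)"
proof -
  have "bos_exp s (- j) = bos_exp (-1 - s) j" for j
    by (simp add: bos_exp_def algebra_simps)
  then show ?thesis
    unfolding bos_def
    by (intro Sum_any.reindex_cong[OF bij_uminus]) (simp add: fun_eq_iff bos_term_def algebra_simps)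
qed

lemma bos_pascal2:
  assumes "0 \<le> a2" "a2 + 2 * b2 \<noteq> 0" "-1 \<le> s" "s \<le> 2"
  shows "bos a1 b1 a2 b2 s = bos a1 b1 (a2 - 1) b2 s + q ^ nat a2 * bos a1 b1 a2 (b2 - 1) (s - 2)"
proof -
  have "bos a2 b2 a1 b1 (-1 - s)
      = bos (a2 - 1) b2 a1 b1 (-1 - s) + q ^ nat a2 * bos a2 (b2 - 1) a1 b1 (-1 - (s - 2))"
    using bos_pascal[of a2 b2 "-1 - s"] assms by (simp add: algebra_simps)
  then show ?thesis
    by (simp only: bos_reflect[of a1])
qed

lemma bos_pascal2':
  assumes "0 \<le> b2" "a2 + 2 * b2 \<noteq> 0" "-3 \<le> s" "s \<le> 1"
  shows "bos a1 b1 a2 b2 s = bos a1 b1 a2 (b2 - 1) s + q ^ nat b2 * bos a1 b1 (a2 - 1) b2 (s + 1)"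
proof -
  have "bos a2 b2 a1 b1 (-1 - s)
      = bos a2 (b2 - 1) a1 b1 (-1 - s) + q ^ nat b2 * bos (a2 - 1) b2 a1 b1 (-1 - (s + 1))"
    using bos_pascal'[of b2 a2 "-1 - s"] assms by (simp add: algebra_simps)
  then show ?thesis
    by (simp only: bos_reflect[of a1])
qed

(* j -> -1 - j swaps the two binomial factors and fixes the exponent. *)
lemma bos_vanish: "bos a b (a - 2) (b + 1) 2 = 0"
  unfolding bos_def
proof (rule Sum_any_eq_0_if_sign_reversing)
  show "bij (\<lambda>j::int. -1 - j)"
    by (rule o_bij[of "\<lambda>j. -1 - j"]) (auto simp: fun_eq_iff)
next
  fix j :: int
  have "even (nat \<bar>-1 - j\<bar>) \<longleftrightarrow> odd (nat \<bar>j\<bar>)"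
    by (auto simp: even_nat_iff)
  then have "(-1 :: rat fps) ^ nat \<bar>-1 - j\<bar> = - ((-1) ^ nat \<bar>j\<bar>)"
    by (simp add: minus_one_power_iff)
  moreover have "bos_exp 2 (-1 - j) = bos_exp 2 j"
    by (simp add: bos_exp_def algebra_simps power2_eq_square)
  ultimately show "bos_term a b (a - 2) (b + 1) 2 (-1 - j) = - bos_term a b (a - 2) (b + 1) 2 j"
    by (simp add: bos_term_def algebra_simps)
qed

lemma bos_eq_0:
  assumes "a1 + a2 < 0"
  shows "bos a1 b1 a2 b2 s = 0"
proof -
  have "bos_term a1 b1 a2 b2 s j = 0" for j
    using assms by (cases "a1 + 2 * j < 0") (simp_all add: bos_term_def)
  then show ?thesis
    by (simp add: bos_def)
qed

lemma bos_b1_b2_zero: "bos a1 0 a2 0 s = (if 0 \<le> a1 \<and> 0 \<le> a2 then 1 else 0)"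
proof -
  have "bos a1 0 a2 0 s = bos_term a1 0 a2 0 s 0"
    unfolding bos_def by (rule Sum_any_eq_single) (auto simp: bos_term_def neq_iff)
  then show ?thesis
    by (simp add: bos_term_def bos_exp_def)
qed

lemma bos_a1_a2_zero: "bos 0 b1 0 b2 s = (if 0 \<le> b1 \<and> 0 \<le> b2 then 1 else 0)"
proof -
  have "bos 0 b1 0 b2 s = bos_term 0 b1 0 b2 s 0"
    unfolding bos_def by (rule Sum_any_eq_single) (auto simp: bos_term_def neq_iff)
  then show ?thesis
    by (simp add: bos_term_def bos_exp_def)
qed

section \<open>The positive sums\<close>

definition ferm_term :: "int \<Rightarrow> int \<Rightarrow> int \<Rightarrow> int \<Rightarrow> int \<Rightarrow> rat fps" where
  "ferm_term a b m t n = q ^ nat (n\<^sup>2 + t * n) * qbinom2 a (m - n) * qbinom2 n (b - n)"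

(* The right-hand side of the theorem is ferm (2L-1) (L-1) M 0. *)
definition ferm :: "int \<Rightarrow> int \<Rightarrow> int \<Rightarrow> int \<Rightarrow> rat fps" where
  "ferm a b m t = Sum_any (ferm_term a b m t)"

lemma finite_ferm_term_support: "finite {n. ferm_term a b m t n \<noteq> 0}"
proof (rule finite_subset)
  show "{n. ferm_term a b m t n \<noteq> 0} \<subseteq> {0..m}"
    by (rule subsetI, rule ccontr) (auto simp: ferm_term_def)
qed simp

lemma ferm_pascal:
  assumes "a \<noteq> 0"
  shows "ferm a b m t = ferm (a - 1) b m t + q ^ nat a * ferm a b (m - 1) t"
  unfolding ferm_def
proof (rule Sum_any_add_mult[OF _ finite_ferm_term_support finite_ferm_term_support])
  fix n
  have "qbinom2 a (m - n) = qbinom2 (a - 1) (m - n) + q ^ nat a * qbinom2 a (m - 1 - n)"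
    using qbinom2_pascal[of a "m - n"] assms by (simp add: algebra_simps)
  then show "ferm_term a b m t n = ferm_term (a - 1) b m t n + q ^ nat a * ferm_term a b (m - 1) t n"
    by (simp add: ferm_term_def algebra_simps)
qed

lemma ferm_pascal':
  assumes "a \<noteq> 0" "1 \<le> t" "0 \<le> m"
  shows "ferm a b m t = ferm a b (m - 1) t + q ^ nat m * ferm (a - 1) b m (t - 1)"
  unfolding ferm_def
proof (rule Sum_any_add_mult[OF _ finite_ferm_term_support finite_ferm_term_support])
  fix n
  have shift: "q ^ nat (n\<^sup>2 + t * n) * (q ^ nat (m - n) * qbinom2 (a - 1) (m - n) * qbinom2 n (b - n))
      = q ^ nat m * (q ^ nat (n\<^sup>2 + (t - 1) * n) * qbinom2 (a - 1) (m - n) * qbinom2 n (b - n))"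
  proof (cases "0 \<le> n \<and> n \<le> m")
    case True
    moreover have "0 \<le> n\<^sup>2 + (t - 1) * n" "0 \<le> n\<^sup>2 + t * n"
      using True assms by simp_all
    ultimately have "int (nat (n\<^sup>2 + t * n) + nat (m - n)) = int (nat m + nat (n\<^sup>2 + (t - 1) * n))"
      by (simp add: algebra_simps)
    then have "nat (n\<^sup>2 + t * n) + nat (m - n) = nat m + nat (n\<^sup>2 + (t - 1) * n)"
      by (simp only: of_nat_eq_iff)
    then show ?thesis
      by (simp add: mult.assoc[symmetric] flip: power_add)
  qed auto
  have "qbinom2 a (m - n) = q ^ nat (m - n) * qbinom2 (a - 1) (m - n) + qbinom2 a (m - 1 - n)"
    using qbinom2_pascal'[of a "m - n"] assms by (simp add: algebra_simps)
  then have "ferm_term a b m t n = ferm_term a b (m - 1) t n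
      + q ^ nat (n\<^sup>2 + t * n) * (q ^ nat (m - n) * qbinom2 (a - 1) (m - n) * qbinom2 n (b - n))"
    by (simp add: ferm_term_def algebra_simps)
  then show "ferm_term a b m t n = ferm_term a b (m - 1) t n + q ^ nat m * ferm_term (a - 1) b m (t - 1) n"
    unfolding shift by (simp add: ferm_term_def)
qed

lemma ferm_pascal_inner:
  assumes "0 < b"
  shows "ferm a b m 0 = ferm a (b - 1) m 0 + q ^ nat b * ferm a (b - 1) (m - 1) 1"
proof -
  define u where "u n = q ^ nat (n\<^sup>2) * qbinom2 a (m - n) * (q ^ nat (b - n) * qbinom2 (n - 1) (b - n))"
    for n
  have pascal: "ferm_term a b m 0 n = ferm_term a (b - 1) m 0 n + u n" for n
  proof -
    have "qbinom2 n (b - n) = q ^ nat (b - n) * qbinom2 (n - 1) (b - n) + qbinom2 n (b - 1 - n)"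
      using qbinom2_pascal'[of n "b - n"] assms by (simp add: algebra_simps)
    then show ?thesis
      by (simp add: ferm_term_def u_def algebra_simps)
  qed
  have shift: "u (k + 1) = q ^ nat b * ferm_term a (b - 1) (m - 1) 1 k" for k
  proof (cases "0 \<le> k \<and> k \<le> b - 1")
    case True
    then have "int (nat ((k + 1)\<^sup>2) + nat (b - (k + 1))) = int (nat b + nat (k\<^sup>2 + 1 * k))"
      by (simp add: algebra_simps power2_eq_square)
    then have "nat ((k + 1)\<^sup>2) + nat (b - (k + 1)) = nat b + nat (k\<^sup>2 + 1 * k)"
      by (simp only: of_nat_eq_iff)
    then have "q ^ nat ((k + 1)\<^sup>2) * q ^ nat (b - (k + 1)) = q ^ nat b * q ^ nat (k\<^sup>2 + 1 * k)"
      by (simp flip: power_add)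
    then show ?thesis
      unfolding u_def ferm_term_def by (simp add: algebra_simps)
  qed (auto simp: u_def ferm_term_def)
  have "finite {n. u n \<noteq> 0}"
  proof (rule finite_subset)
    show "{n. u n \<noteq> 0} \<subseteq> {1..m}"
      by (rule subsetI, rule ccontr) (auto simp: u_def)
  qed simp
  then have "ferm a b m 0 = ferm a (b - 1) m 0 + Sum_any u"
    unfolding ferm_def pascal by (simp add: Sum_any.distrib finite_ferm_term_support)
  also have "Sum_any u = Sum_any (\<lambda>k. q ^ nat b * ferm_term a (b - 1) (m - 1) 1 k)"
    by (rule Sum_any.reindex_cong[OF bij_plus_right[of 1]]) (simp add: fun_eq_iff shift)
  also have "\<dots> = q ^ nat b * ferm a (b - 1) (m - 1) 1"
    unfolding ferm_def by (simp add: Sum_any_right_distrib finite_ferm_term_support)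
  finally show ?thesis .
qed

lemma ferm_eq_0: "a < 0 \<Longrightarrow> ferm a b m t = 0"
  by (simp add: ferm_def ferm_term_def)

lemma ferm_m_zero: "ferm a b 0 t = (if 0 \<le> a \<and> 0 \<le> b then 1 else 0)"
proof -
  have "ferm a b 0 t = ferm_term a b 0 t 0"
    unfolding ferm_def by (rule Sum_any_eq_single) (auto simp: ferm_term_def neq_iff)
  then show ?thesis
    by (simp add: ferm_term_def)
qed

lemma ferm_b_zero: "ferm a 0 m t = qbinom2 a m"
proof -
  have "ferm a 0 m t = ferm_term a 0 m t 0"
    unfolding ferm_def by (rule Sum_any_eq_single) (auto simp: ferm_term_def neq_iff)
  then show ?thesis
    by (simp add: ferm_term_def)
qed

section \<open>The q-difference system\<close>

definition q_system ::
    "(nat \<Rightarrow> nat \<Rightarrow> rat fps) \<Rightarrow> (nat \<Rightarrow> nat \<Rightarrow> rat fps) \<Rightarrow> (nat \<Rightarrow> nat \<Rightarrow> rat fps) \<Rightarrow> bool"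
  where "q_system a b c \<longleftrightarrow> (\<forall>L M.
    b (Suc L) (Suc M) = a L (Suc M) + q ^ (2 * L + 1) * b (Suc L) M \<and>
    c (Suc L) (Suc M) = c (Suc L) M + q ^ Suc M * a L (Suc M) \<and>
    a (Suc L) (Suc M) = b (Suc L) (Suc M) + q ^ Suc L * c (Suc L) M + q ^ (2 * L + 2) * a (Suc L) M)"

lemma q_system_unique:
  assumes "q_system a b c" "q_system a' b' c'"
    and boundary: "\<And>L M. L = 0 \<or> M = 0 \<Longrightarrow> a L M = a' L M \<and> b L M = b' L M \<and> c L M = c' L M"
  shows "a L M = a' L M \<and> b L M = b' L M \<and> c L M = c' L M"
proof (induction L arbitrary: M)
  case 0
  then show ?case
    using boundary by simp
next
  case (Suc L)
  note outer = Suc.IH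
  show ?case
  proof (induction M)
    case 0
    then show ?case
      using boundary by simp
  next
    case (Suc M)
    have "b (Suc L) (Suc M) = b' (Suc L) (Suc M)" "c (Suc L) (Suc M) = c' (Suc L) (Suc M)"
      using assms(1,2) outer[of "Suc M"] Suc.IH unfolding q_system_def by simp_all
    moreover from this have "a (Suc L) (Suc M) = a' (Suc L) (Suc M)"
      using assms(1,2) Suc.IH unfolding q_system_def by simp
    ultimately show ?case
      by simp
  qed
qed

definition bosA :: "nat \<Rightarrow> nat \<Rightarrow> rat fps" where
  "bosA L M = bos (int L) (int M) (int L) (int M) 0"

definition bosB :: "nat \<Rightarrow> nat \<Rightarrow> rat fps" where
  "bosB L M = bos (int L) (int M) (int L - 1) (int M) 0"

definition bosC :: "nat \<Rightarrow> nat \<Rightarrow> rat fps" where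
  "bosC L M = bos (int L) (int M) (int L - 1) (int M) 1"

definition fermA :: "nat \<Rightarrow> nat \<Rightarrow> rat fps" where
  "fermA L M = ferm (2 * int L) (int L) (int M) 0"

definition fermB :: "nat \<Rightarrow> nat \<Rightarrow> rat fps" where
  "fermB L M = ferm (2 * int L - 1) (int L - 1) (int M) 0"

definition fermC :: "nat \<Rightarrow> nat \<Rightarrow> rat fps" where
  "fermC L M = ferm (2 * int L - 1) (int L - 1) (int M) 1"

lemma nat_int_plus_1 [simp]: "nat (int k + 1) = Suc k" "nat (1 + int k) = Suc k"
  by (simp_all add: nat_add_distrib)

lemma q_system_bos: "q_system bosA bosB bosC"
  unfolding q_system_def
proof (intro allI conjI)
  fix L M :: nat
  have vanish: "bos (int L + 1) (int M) (int L - 1) (int M + 1) 2 = 0"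
    using bos_vanish[of "int L + 1" "int M"] by simp
  show "bosB (Suc L) (Suc M) = bosA L (Suc M) + q ^ (2 * L + 1) * bosB (Suc L) M"
  proof -
    have "bos (int L + 1) (int M + 1) (int L) (int M + 1) 0
        = bos (int L) (int M + 1) (int L) (int M + 1) 0 + q ^ Suc L * bos (int L + 1) (int M) (int L) (int M + 1) 2"
      using bos_pascal[of "int L + 1" "int M + 1" 0] by simp
    moreover have "bos (int L + 1) (int M) (int L) (int M + 1) 2
        = bos (int L + 1) (int M) (int L - 1) (int M + 1) 2 + q ^ L * bos (int L + 1) (int M) (int L) (int M) 0"
      using bos_pascal2[of "int L" "int M + 1" 2] by simp
    ultimately show ?thesis
      using vanish by (simp add: bosA_def bosB_def algebra_simps power_add mult_2 mult_2_right)
  qed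
  show "bosC (Suc L) (Suc M) = bosC (Suc L) M + q ^ Suc M * bosA L (Suc M)"
  proof -
    have "bos (int L + 1) (int M + 1) (int L) (int M + 1) 1
        = bos (int L + 1) (int M) (int L) (int M + 1) 1 + q ^ Suc M * bos (int L) (int M + 1) (int L) (int M + 1) 0"
      using bos_pascal'[of "int M + 1" "int L + 1" 1] by simp
    moreover have "bos (int L + 1) (int M) (int L) (int M + 1) 1
        = bos (int L + 1) (int M) (int L) (int M) 1 + q ^ Suc M * bos (int L + 1) (int M) (int L - 1) (int M + 1) 2"
      using bos_pascal2'[of "int M + 1" "int L" 1] by simp
    ultimately show ?thesis
      using vanish by (simp add: bosA_def bosC_def algebra_simps)
  qed
  show "bosA (Suc L) (Suc M) = bosB (Suc L) (Suc M) + q ^ Suc L * bosC (Suc L) M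
      + q ^ (2 * L + 2) * bosA (Suc L) M"
  proof -
    have "bos (int L + 1) (int M + 1) (int L + 1) (int M + 1) 0
        = bos (int L + 1) (int M + 1) (int L) (int M + 1) 0 + q ^ Suc L * bos (int L + 1) (int M + 1) (int L + 1) (int M) (-2)"
      using bos_pascal2[of "int L + 1" "int M + 1" 0] by simp
    moreover have "bos (int L + 1) (int M + 1) (int L + 1) (int M) (-2)
        = bos (int L) (int M + 1) (int L + 1) (int M) (-2) + q ^ Suc L * bos (int L + 1) (int M) (int L + 1) (int M) 0"
      using bos_pascal[of "int L + 1" "int M + 1" "-2"] by simp
    moreover have "bos (int L) (int M + 1) (int L + 1) (int M) (-2) = bos (int L + 1) (int M) (int L) (int M + 1) 1"
      using bos_reflect[of "int L" "int M + 1" "int L + 1" "int M" "-2"] by simp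
    moreover have "bos (int L + 1) (int M) (int L) (int M + 1) 1
        = bos (int L + 1) (int M) (int L) (int M) 1 + q ^ Suc M * bos (int L + 1) (int M) (int L - 1) (int M + 1) 2"
      using bos_pascal2'[of "int M + 1" "int L" 1] by simp
    ultimately show ?thesis
      using vanish by (simp add: bosA_def bosB_def bosC_def algebra_simps power_add mult_2 mult_2_right)
  qed
qed

lemma q_system_ferm: "q_system fermA fermB fermC"
  unfolding q_system_def
proof (intro allI conjI)
  fix L M :: nat
  have pow: "q ^ nat (2 * int L + 1) = q ^ (2 * L + 1)" "q ^ nat (2 * int L + 2) = q ^ (2 * L + 2)"
    by (simp_all add: nat_add_distrib nat_mult_distrib)
  show "fermB (Suc L) (Suc M) = fermA L (Suc M) + q ^ (2 * L + 1) * fermB (Suc L) M"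
    using ferm_pascal[of "2 * int L + 1" "int L" "int M + 1" 0] pow(1)
    by (simp add: fermA_def fermB_def algebra_simps)
  show "fermC (Suc L) (Suc M) = fermC (Suc L) M + q ^ Suc M * fermA L (Suc M)"
    using ferm_pascal'[of "2 * int L + 1" 1 "int M + 1" "int L"]
    by (simp add: fermA_def fermC_def algebra_simps)
  show "fermA (Suc L) (Suc M) = fermB (Suc L) (Suc M) + q ^ Suc L * fermC (Suc L) M
      + q ^ (2 * L + 2) * fermA (Suc L) M"
    using ferm_pascal[of "2 * int L + 2" "int L + 1" "int M + 1" 0]
      ferm_pascal_inner[of "int L + 1" "2 * int L + 1" "int M + 1"] pow(2)
    by (simp add: fermA_def fermB_def fermC_def algebra_simps)
qed

lemma bos_ferm_boundary:
  "L = 0 \<or> M = 0 \<Longrightarrow> bosA L M = fermA L M \<and> bosB L M = fermB L M \<and> bosC L M = fermC L M"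
  by (auto simp: bosA_def bosB_def bosC_def fermA_def fermB_def fermC_def
      bos_a1_a2_zero bos_b1_b2_zero bos_eq_0 ferm_eq_0 ferm_m_zero ferm_b_zero)

lemma BB_eq_qbinom2:
  "BB L M (2 * j + 1) j = qbinom2 (L + 1 + 2 * j) (M - j) * qbinom2 (L - 1 - 2 * j) (M + j)"
  by (simp add: BB_def qbinom2_def algebra_simps)

lemma sum_BB_eq_bos:
  "(\<Sum>j\<in>{j. BB L M (2 * j + 1) j \<noteq> 0}.
      (-1) ^ nat \<bar>j\<bar> * q ^ nat (j * (5 * j + 1) div 2) * BB L M (2 * j + 1) j)
    = bos (L + 1) M (L - 1) M 0"
proof -
  have "bos_exp 0 j = nat (j * (5 * j + 1) div 2)" for j
    by (simp add: bos_exp_def algebra_simps power2_eq_square)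
  then have summand: "(-1) ^ nat \<bar>j\<bar> * q ^ nat (j * (5 * j + 1) div 2) * BB L M (2 * j + 1) j
      = bos_term (L + 1) M (L - 1) M 0 j" for j
    unfolding BB_eq_qbinom2 by (simp add: bos_term_def algebra_simps)
  have "{j. BB L M (2 * j + 1) j \<noteq> 0} = {j. bos_term (L + 1) M (L - 1) M 0 j \<noteq> 0}"
    by (auto simp flip: summand)
  then show ?thesis
    by (simp add: bos_def Sum_any.expand_set summand)
qed

lemma sum_qbinom_eq_ferm:
  "(\<Sum>n\<in>{n. qbinom (a + m - int n) a * qbinom b (int n) \<noteq> 0}.
      q ^ n\<^sup>2 * qbinom (a + m - int n) a * qbinom b (int n))
    = ferm a b m 0"
proof -
  have summand: "ferm_term a b m 0 (int n) = q ^ n\<^sup>2 * qbinom (a + m - int n) a * qbinom b (int n)" for n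
    by (simp add: ferm_term_def qbinom2_def nat_power_eq algebra_simps)
  have "ferm a b m 0 = Sum_any (\<lambda>n. ferm_term a b m 0 (int n))"
    unfolding ferm_def by (rule Sum_any_nonneg_int) (simp add: ferm_term_def)
  also have "\<dots> = Sum_any (\<lambda>n. q ^ n\<^sup>2 * qbinom (a + m - int n) a * qbinom b (int n))"
    by (simp only: summand)
  finally show ?thesis
    by (simp add: Sum_any.expand_set)
qed

theorem lemma5p1:
  fixes L M :: nat
  shows "(\<Sum>j\<in>{j::int. BB (int L) (int M) (2*j+1) j \<noteq> 0}.
            (-1) ^ nat \<bar>j\<bar> * fps_X ^ nat (j * (5*j+1) div 2) * BB (int L) (int M) (2*j+1) j)
       = (\<Sum>n\<in>{n::nat. qbinom (2*int L + int M - int n - 1) (2*int L - 1) * qbinom (int L - 1) (int n) \<noteq> 0}.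
            fps_X ^ (n^2) * qbinom (2*int L + int M - int n - 1) (2*int L - 1) * qbinom (int L - 1) (int n))"
proof -
  have "bos (int L + 1) (int M) (int L - 1) (int M) 0 = bosB L M"
    using bos_pascal[of "int L + 1" "int M" 0 "int L - 1" "int M"] bos_vanish[of "int L + 1" "int M - 1"]
    by (simp add: bosB_def)
  also have "\<dots> = fermB L M"
    using q_system_unique[OF q_system_bos q_system_ferm bos_ferm_boundary] by blast
  also have "\<dots> = ferm (2 * int L - 1) (int L - 1) (int M) 0"
    by (simp add: fermB_def)
  finally have "bos (int L + 1) (int M) (int L - 1) (int M) 0 = ferm (2 * int L - 1) (int L - 1) (int M) 0" .
  moreover have "2 * int L + int M - int n - 1 = (2 * int L - 1) + int M - int n" for n
    by simp
  ultimately show ?thesis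
    by (simp only: sum_BB_eq_bos sum_qbinom_eq_ferm)
qed

end
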